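(* Let $a\in[0,\infty)$ and let $\theta:[0,1]\to[0,\infty]$ and $\vartheta:[0,\infty]\to[0,1]$ be continuous and decreasing functions such that (i) $\theta(x)=\frac{a}{2}$ if and only if $x=1$, and (ii) the function $O_{\theta,\vartheta}:[0,1]^2\to[0,1]$, $O_{\theta,\vartheta}(x,y)=\vartheta(\theta(x)+\theta(y))$, is an overlap function. Then $\vartheta(x)=1$ if and only if $x\in[0,a]$.
   Context: "Decreasing" means non-increasing and "increasing" means non-decreasing. Arithmetic in $[0,\infty]$ uses $c+\infty=\infty$; continuity on $[0,\infty]$ refers to the usual topology of the extended half-line. An overlap function is a map $O:[0,1]^2\to[0,1]$ that is (O1) commutative, (O2) $O(x,y)=0$ iff $xy=0$, (O3) $O(x,y)=1$ iff $xy=1$, (O4) increasing in each variable, (O5) continuous. *)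

theory Defs
  imports "HOL-Analysis.Analysis"
begin

definition overlap_function :: "(real \<Rightarrow> real \<Rightarrow> real) \<Rightarrow> bool" where
  "overlap_function F \<longleftrightarrow>
     (\<forall>x\<in>{0..1}. \<forall>y\<in>{0..1}. F x y \<in> {0..1}) \<and>
     (\<forall>x\<in>{0..1}. \<forall>y\<in>{0..1}. F x y = F y x) \<and>
     (\<forall>x\<in>{0..1}. \<forall>y\<in>{0..1}. F x y = 0 \<longleftrightarrow> x * y = 0) \<and>
     (\<forall>x\<in>{0..1}. \<forall>y\<in>{0..1}. F x y = 1 \<longleftrightarrow> x * y = 1) \<and>
     (\<forall>x\<in>{0..1}. \<forall>x'\<in>{0..1}. \<forall>y\<in>{0..1}. x \<le> x' \<longrightarrow> F x y \<le> F x' y) \<and>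
     (\<forall>x\<in>{0..1}. \<forall>y\<in>{0..1}. \<forall>y'\<in>{0..1}. y \<le> y' \<longrightarrow> F x y \<le> F x y') \<and>
     continuous_on ({0..1} \<times> {0..1}) (\<lambda>(x, y). F x y)"

end

theory Submission
  imports Defs
begin

text \<open>Since \<open>O(1,1) = 1\<close> and \<open>\<theta>(1) = a/2\<close>, we get \<open>\<vartheta>(a) = 1\<close>, and
  monotonicity spreads this to \<open>[0,a]\<close>. Conversely, if \<open>\<vartheta>(t) = 1\<close> for some
  \<open>t > a = \<theta>(1) + \<theta>(1)\<close>, continuity of \<open>\<theta>\<close> at \<open>1\<close> yields \<open>x < 1\<close> with
  \<open>\<theta>(x) + \<theta>(1) < t\<close>; then \<open>O(x,1) \<ge> \<vartheta>(t) = 1\<close>, contradicting (O3).\<close>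

lemma overlap_function_eq_1_iff:
  assumes "overlap_function F" "x \<in> {0..1}" "y \<in> {0..1}"
  shows "F x y = 1 \<longleftrightarrow> x * y = 1"
  using assms unfolding overlap_function_def by blast

lemma continuous_on_Icc_less_left_of_right_endpoint:
  fixes f :: "real \<Rightarrow> 'b::linorder_topology"
  assumes "continuous_on {a..b} f" "a < b" "f b < t"
  shows "\<exists>x\<in>{a..<b}. f x < t"
proof -
  have "(f \<longlongrightarrow> f b) (at_left b)"
    using assms(1,2) by (rule continuous_on_Icc_at_leftD)
  then have "\<forall>\<^sub>F x in at_left b. f x < t"
    using assms(3) by (rule order_tendstoD)
  moreover have "\<forall>\<^sub>F x in at_left b. x \<in> {a<..<b}"
    using assms(2) by (rule eventually_at_left_real)
  ultimately have "\<forall>\<^sub>F x in at_left b. x \<in> {a..<b} \<and> f x < t"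
    by eventually_elim auto
  then show ?thesis
    using eventually_happens'[OF trivial_limit_at_left_real] by blast
qed

lemma additive_generator_overlap_eq_1_iff:
  fixes \<theta> :: "real \<Rightarrow> ennreal" and \<phi> :: "ennreal \<Rightarrow> real"
  assumes theta_cont: "continuous_on {0..1} \<theta>"
    and phi_le_1: "\<And>t. \<phi> t \<le> 1"
    and phi_dec: "\<And>s t. s \<le> t \<Longrightarrow> \<phi> t \<le> \<phi> s"
    and overlap: "overlap_function (\<lambda>x y. \<phi> (\<theta> x + \<theta> y))"
  shows "\<phi> t = 1 \<longleftrightarrow> t \<le> \<theta> 1 + \<theta> 1"
proof
  assume phi_t: "\<phi> t = 1"
  show "t \<le> \<theta> 1 + \<theta> 1"
  proof (rule ccontr)
    assume "\<not> t \<le> \<theta> 1 + \<theta> 1"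
    then have "(\<lambda>x. \<theta> x + \<theta> 1) 1 < t" by simp
    moreover have "continuous_on {0..1} (\<lambda>x. \<theta> x + \<theta> 1)"
      by (intro continuous_on_add theta_cont continuous_on_const)
    ultimately obtain x where x: "x \<in> {0..<1}" "\<theta> x + \<theta> 1 < t"
      using continuous_on_Icc_less_left_of_right_endpoint[OF _ zero_less_one] by blast
    have "1 \<le> \<phi> (\<theta> x + \<theta> 1)"
      using phi_dec[of "\<theta> x + \<theta> 1" t] x(2) phi_t by simp
    then have "\<phi> (\<theta> x + \<theta> 1) = 1"
      using phi_le_1[of "\<theta> x + \<theta> 1"] by linarith
    with x(1) show False
      using overlap_function_eq_1_iff[OF overlap, of x 1] by simp
  qed
next
  assume "t \<le> \<theta> 1 + \<theta> 1"
  moreover have "\<phi> (\<theta> 1 + \<theta> 1) = 1"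
    using overlap_function_eq_1_iff[OF overlap, of 1 1] by simp
  ultimately have "1 \<le> \<phi> t"
    using phi_dec[of t "\<theta> 1 + \<theta> 1"] by simp
  then show "\<phi> t = 1"
    using phi_le_1[of t] by linarith
qed

theorem proposition3p2:
  fixes a :: real
    and \<theta> :: "real \<Rightarrow> ennreal"
    and \<phi> :: "ennreal \<Rightarrow> real"
  assumes a_nonneg: "0 \<le> a"
    and theta_cont: "continuous_on {0..1} \<theta>"
    and theta_dec: "\<And>x y. x \<in> {0..1} \<Longrightarrow> y \<in> {0..1} \<Longrightarrow> x \<le> y \<Longrightarrow> \<theta> y \<le> \<theta> x"
    and phi_range: "\<And>t. \<phi> t \<in> {0..1}"
    and phi_cont: "continuous_on UNIV \<phi>"
    and phi_dec: "\<And>s t. s \<le> t \<Longrightarrow> \<phi> t \<le> \<phi> s"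
    and theta_half: "\<And>x. x \<in> {0..1} \<Longrightarrow> (\<theta> x = ennreal (a / 2) \<longleftrightarrow> x = 1)"
    and overlap: "overlap_function (\<lambda>x y. \<phi> (\<theta> x + \<theta> y))"
  shows "\<forall>t. \<phi> t = 1 \<longleftrightarrow> t \<le> ennreal a"
proof -
  have "\<theta> 1 + \<theta> 1 = ennreal (a / 2) + ennreal (a / 2)"
    using theta_half[of 1] by simp
  also have "\<dots> = ennreal a"
    using a_nonneg by (simp flip: ennreal_plus)
  finally have "\<theta> 1 + \<theta> 1 = ennreal a" .
  moreover have "\<And>t. \<phi> t \<le> 1"
    using phi_range by simp
  ultimately show ?thesis
    using additive_generator_overlap_eq_1_iff[OF theta_cont _ phi_dec overlap] by simp
qed

end
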